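(* Let $k \geq 1$ be an integer, let $A : \mathbb{Z} \to V$ be an array (any function from integers to some value set $V$), let $R$ be any predicate on pairs $(v,(x_1,\ldots,x_k)) \in V \times \mathbb{Z}^k$, and let $C$ be any predicate on $\mathbb{Z}^k$. Let $a_1,\ldots,a_k, b \in \mathbb{Z}$, let $\mathit{min}_1,\ldots,\mathit{min}_k \in \mathbb{Z}$ and $\mathit{max}_k \in \mathbb{Z}$, and put $n_k = \mathit{max}_k - \mathit{min}_k$. Define $$X(x_1,\ldots,x_k) \;=\; C(x_1,\ldots,x_k) \wedge \bigwedge_{i=1}^k (\mathit{min}_i \leq x_i) \wedge x_k < \mathit{max}_k,$$ and $f(x_1,\ldots,x_k) = \sum_{i=1}^k a_i x_i + b$. Define $\mathit{off} = \sum_{i=1}^k a_i\,\mathit{min}_i + b$, and for $x \in \mathbb{Z}$ define $\mathit{base}_k(x) = |x - \mathit{off}|$ and $\mathit{base}_i(x) = \mathit{base}_{i+1}(x) \bmod a_{i+1}$ for $1 \leq i < k$. Define $$f^{-1}(x) = \big(\mathit{base}_1(x)/|a_1| + \mathit{min}_1,\ \ldots,\ \mathit{base}_k(x)/|a_k| + \mathit{min}_k\big)$$ and $$Y(x) = C(f^{-1}(x)) \wedge \mathit{base}_1(x) \bmod a_1 = 0 \wedge \big(a_1 > 0 \Rightarrow 0 \leq x - \mathit{off} < a_k n_k\big) \wedge \big(a_1 < 0 \Rightarrow a_k n_k < x - \mathit{off} \leq 0\big).$$ Assume: (1) $n_k > 0$; (2) $a_i \neq 0$ for all $1 \leq i \leq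 k$; (3) for all $1 \leq i < k$, $a_i \geq 0 \iff a_{i+1} \geq 0$; (4) for all $1 \leq i < k$ and all $(x_1,\ldots,x_k) \in \mathbb{Z}^k$ with $X(x_1,\ldots,x_k)$, $\sum_{j=1}^{i} |a_j|\,(x_j - \mathit{min}_j) < |a_{i+1}|$. Then $$\Big(\forall (x_1,\ldots,x_k) \in \mathbb{Z}^k.\ X(x_1,\ldots,x_k) \Rightarrow R\big(A[f(x_1,\ldots,x_k)],(x_1,\ldots,x_k)\big)\Big) \iff \Big(\forall x \in \mathbb{Z}.\ Y(x) \Rightarrow R\big(A[x], f^{-1}(x)\big)\Big).$$
   Context: All quantities are integers. For an integer $u \geq 0$ and a nonzero integer $a$, $u \bmod a$ denotes the remainder of $u$ modulo $|a|$, i.e. the unique $r$ with $0 \leq r < |a|$ and $u \equiv r \pmod{|a|}$, and $u/|a|$ denotes integer division discarding the remainder (note all $\mathit{base}_i(x)$ are nonnegative). $A[y]$ denotes the value of the array $A$ at index $y$. The theorem expresses that a nested quantifier over $x_1,\ldots,x_k$ indexing $A$ by a linear expression is equivalent to a single quantifier over the index $x$. *)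

theory Defs
  imports Main
begin

text \<open>Tuples in Z^k are int lists of length k; component x_i is xs ! (i - 1).
  Coefficients a_i and lower bounds min_i are functions indexed by 1..k.\<close>

function base :: "(nat \<Rightarrow> int) \<Rightarrow> nat \<Rightarrow> int \<Rightarrow> nat \<Rightarrow> int \<Rightarrow> int" where
  "base a k off i x =
     (if k \<le> i then \<bar>x - off\<bar> else base a k off (Suc i) x mod \<bar>a (Suc i)\<bar>)"
  by auto
termination by (relation "measure (\<lambda>(a, k, off, i, x). k - i)") auto

declare base.simps [simp del]

definition finv :: "(nat \<Rightarrow> int) \<Rightarrow> (nat \<Rightarrow> int) \<Rightarrow> nat \<Rightarrow> int \<Rightarrow> int \<Rightarrow> int list" where
  "finv a mn k off x = map (\<lambda>i. base a k off i x div \<bar>a i\<bar> + mn i) [1..<Suc k]"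

end

theory Submission
  imports Defs
begin

text \<open>For a point of the box, the shifted coordinates \<open>x\<^sub>i - min\<^sub>i\<close> are the digits of a
  mixed-radix representation of \<open>|f(x) - off|\<close> with weights \<open>|a\<^sub>i|\<close>: hypothesis (4) says that
  every partial sum stays below the next weight. Since all \<open>a\<^sub>i\<close> have the same sign,
  \<open>f(x) - off\<close> is that number up to the common sign, and reducing it successively modulo
  \<open>|a\<^sub>k|, ..., |a\<^sub>2|\<close> recovers the partial sums, so \<open>f\<^sup>-\<^sup>1\<close> inverts \<open>f\<close>. Conversely every
  \<open>x\<close> satisfying \<open>Y\<close> is the image of the box point \<open>f\<^sup>-\<^sup>1(x)\<close>. Hence \<open>f\<close> is a bijection
  between the two index sets and the quantifiers can be exchanged.\<close>

lemma base_top: "k \<le> i \<Longrightarrow> base a k off i x = \<bar>x - off\<bar>"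
  by (simp add: base.simps)

lemma base_below: "i < k \<Longrightarrow> base a k off i x = base a k off (Suc i) x mod \<bar>a (Suc i)\<bar>"
  by (subst base.simps) simp

lemma base_nonneg: "0 \<le> base a k off i x"
proof (induction a k off i x rule: base.induct)
  case (1 a k off i x)
  then show ?case
    by (cases "a (Suc i) = 0") (auto simp: base.simps[of a k off i x])
qed

lemma length_finv [simp]: "length (finv a mn k off x) = k"
  by (simp add: finv_def)

lemma nth_finv:
  assumes "1 \<le> i" "i \<le> k"
  shows "finv a mn k off x ! (i - 1) = base a k off i x div \<bar>a i\<bar> + mn i"
proof -
  have "[1..<Suc k] ! (i - 1) = i"
    using assms by (subst nth_upt) auto
  then show ?thesis
    using assms by (simp add: finv_def del: upt_Suc)
qed

lemma finv_lower:
  assumes "1 \<le> i" "i \<le> k"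
  shows "mn i \<le> finv a mn k off x ! (i - 1)"
  unfolding nth_finv[OF assms] using base_nonneg[of a k off i x] by (simp add: div_int_pos_iff)

lemma finv_upper:
  assumes "1 \<le> k" "\<bar>x - off\<bar> < \<bar>a k\<bar> * n"
  shows "finv a mn k off x ! (k - 1) < mn k + n"
proof -
  have "\<bar>a k\<bar> > 0"
    using assms(2) by (cases "a k = 0") auto
  with assms(2) have "\<bar>x - off\<bar> div \<bar>a k\<bar> < n"
    by (smt (verit) minus_mod_eq_mult_div mult_left_less_imp_less pos_mod_sign)
  then show ?thesis
    unfolding nth_finv[OF assms(1) order_refl] base_top[OF order_refl] by simp
qed

definition mixed_radix :: "(nat \<Rightarrow> int) \<Rightarrow> (nat \<Rightarrow> int) \<Rightarrow> nat \<Rightarrow> int" where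
  "mixed_radix a d i = (\<Sum>j = 1..i. \<bar>a j\<bar> * d j)"

lemma mixed_radix_0 [simp]: "mixed_radix a d 0 = 0"
  by (simp add: mixed_radix_def)

lemma mixed_radix_Suc [simp]:
  "mixed_radix a d (Suc i) = mixed_radix a d i + \<bar>a (Suc i)\<bar> * d (Suc i)"
  by (simp add: mixed_radix_def sum.cl_ivl_Suc)

lemma mixed_radix_nonneg: "\<forall>j\<in>{1..i}. 0 \<le> d j \<Longrightarrow> 0 \<le> mixed_radix a d i"
  unfolding mixed_radix_def by (intro sum_nonneg) auto

lemma base_eq_mixed_radix_quotients:
  assumes "base a k off 1 x mod \<bar>a 1\<bar> = 0" "1 \<le> k" "i \<le> k"
  shows "base a k off i x = mixed_radix a (\<lambda>j. base a k off j x div \<bar>a j\<bar>) i"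
  using assms(3)
proof (induction i)
  case 0
  then show ?case
    using assms(1,2) base_below[of 0 k a off x] by simp
next
  case (Suc i)
  have "base a k off (Suc i) x
      = \<bar>a (Suc i)\<bar> * (base a k off (Suc i) x div \<bar>a (Suc i)\<bar>) + base a k off i x"
    using base_below[of i k a off x] Suc.prems by simp
  then show ?case
    using Suc by simp
qed

lemma weighted_sum_finv:
  assumes "1 \<le> k" "\<forall>i\<in>{1..k}. a i = s * \<bar>a i\<bar>" "\<bar>s\<bar> = 1"
    and "base a k off 1 x mod \<bar>a 1\<bar> = 0" "\<bar>x - off\<bar> = s * (x - off)"
  shows "(\<Sum>i = 1..k. a i * (finv a mn k off x ! (i - 1) - mn i)) = x - off"
proof -
  have "(\<Sum>i = 1..k. a i * (finv a mn k off x ! (i - 1) - mn i))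
      = s * mixed_radix a (\<lambda>j. base a k off j x div \<bar>a j\<bar>) k"
    unfolding mixed_radix_def sum_distrib_left
  proof (intro sum.cong refl)
    fix i
    assume "i \<in> {1..k}"
    then show "a i * (finv a mn k off x ! (i - 1) - mn i)
        = s * (\<bar>a i\<bar> * (base a k off i x div \<bar>a i\<bar>))"
      using assms(2) nth_finv[of i k] by (simp add: mult.assoc)
  qed
  also have "\<dots> = s * (s * (x - off))"
    using base_eq_mixed_radix_quotients[OF assms(4,1) order_refl] base_top[of k k a off x] assms(5)
    by simp
  also have "\<dots> = x - off"
    using assms(3) by (auto simp: abs_if split: if_splits)
  finally show ?thesis .
qed

definition radix_digits :: "(nat \<Rightarrow> int) \<Rightarrow> nat \<Rightarrow> (nat \<Rightarrow> int) \<Rightarrow> bool" where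
  "radix_digits a k d \<longleftrightarrow>
     (\<forall>j\<in>{1..k}. 0 \<le> d j) \<and> (\<forall>i<k. mixed_radix a d i < \<bar>a (Suc i)\<bar>)"

lemma radix_digits_iff:
  "radix_digits a k d \<longleftrightarrow>
     (\<forall>j\<in>{1..k}. 0 \<le> d j) \<and> (0 < k \<longrightarrow> a 1 \<noteq> 0)
     \<and> (\<forall>i. 1 \<le> i \<and> i < k \<longrightarrow> mixed_radix a d i < \<bar>a (i + 1)\<bar>)"
proof -
  have split_0: "(\<forall>i<k. Q i) \<longleftrightarrow> (0 < k \<longrightarrow> Q 0) \<and> (\<forall>i. 1 \<le> i \<and> i < k \<longrightarrow> Q i)"
    for Q :: "nat \<Rightarrow> bool"
    by (metis One_nat_def Suc_leI gr0I le_less_trans not_less_zero)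
  show ?thesis
    unfolding radix_digits_def split_0[of "\<lambda>i. mixed_radix a d i < \<bar>a (Suc i)\<bar>"] by simp
qed

lemma base_eq_mixed_radix:
  assumes "radix_digits a k d" "\<bar>x - off\<bar> = mixed_radix a d k" "i \<le> k"
  shows "base a k off i x = mixed_radix a d i"
  using assms(3)
proof (induction i rule: inc_induct)
  case base
  then show ?case
    using assms(2) by (simp add: base_top)
next
  case (step i)
  have "0 \<le> mixed_radix a d i" "mixed_radix a d i < \<bar>a (Suc i)\<bar>"
    using assms(1) step.hyps by (auto simp: radix_digits_def intro: mixed_radix_nonneg)
  then show ?case
    using step by (simp add: base_below)
qed

lemma mixed_radix_div:
  assumes "radix_digits a k d" "1 \<le> i" "i \<le> k"
  shows "mixed_radix a d i div \<bar>a i\<bar> = d i"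
proof -
  obtain m where m: "i = Suc m"
    using assms(2) by (cases i) auto
  have "0 \<le> mixed_radix a d m" "mixed_radix a d m < \<bar>a i\<bar>"
    using assms m by (auto simp: radix_digits_def intro: mixed_radix_nonneg)
  then show ?thesis
    using m by (simp add: div_pos_pos_trivial)
qed

lemma finv_eq_digits:
  assumes "radix_digits a k d" "\<bar>x - off\<bar> = mixed_radix a d k"
  shows "finv a mn k off x = map (\<lambda>i. d i + mn i) [1..<Suc k]"
  unfolding finv_def
  using assms by (auto simp: base_eq_mixed_radix mixed_radix_div)

lemma base_one_mod_eq_0:
  assumes "radix_digits a k d" "\<bar>x - off\<bar> = mixed_radix a d k" "1 \<le> k"
  shows "base a k off 1 x mod \<bar>a 1\<bar> = 0"
  using base_eq_mixed_radix[OF assms(1,2,3)] by simp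

lemma mixed_radix_less:
  assumes "radix_digits a k d" "1 \<le> k" "d k < n"
  shows "mixed_radix a d k < \<bar>a k\<bar> * n"
proof -
  obtain m where m: "k = Suc m"
    using assms(2) by (cases k) auto
  have "mixed_radix a d m < \<bar>a k\<bar>"
    using assms(1) m by (simp add: radix_digits_def)
  moreover have "\<bar>a k\<bar> * d k \<le> \<bar>a k\<bar> * (n - 1)"
    using assms(3) by (intro mult_left_mono) auto
  ultimately show ?thesis
    using m by (simp add: algebra_simps)
qed

lemma map_nth_pred_upt: "map (\<lambda>i. xs ! (i - 1)) [1..<Suc (length xs)] = xs"
  by (rule nth_equalityI) (simp_all add: nth_upt del: upt_Suc)

lemma finv_of_linear_index:
  assumes "length xs = k" "\<forall>i\<in>{1..k}. a i = s * \<bar>a i\<bar>" "\<bar>s\<bar> = 1"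
    and digits: "radix_digits a k (\<lambda>i. xs ! (i - 1) - mn i)"
    and x: "x - off = (\<Sum>i = 1..k. a i * (xs ! (i - 1) - mn i))"
  shows "\<bar>x - off\<bar> = mixed_radix a (\<lambda>i. xs ! (i - 1) - mn i) k"
    and "\<bar>x - off\<bar> = s * (x - off)"
    and "finv a mn k off x = xs"
proof -
  let ?m = "mixed_radix a (\<lambda>i. xs ! (i - 1) - mn i) k"
  have "x - off = s * ?m"
    using x assms(2) unfolding mixed_radix_def sum_distrib_left
    by (auto intro: sum.cong)
  moreover have "0 \<le> ?m"
    using digits by (simp add: radix_digits_def mixed_radix_nonneg)
  ultimately show m: "\<bar>x - off\<bar> = ?m" and "\<bar>x - off\<bar> = s * (x - off)"
    using assms(3) by (auto simp: abs_mult abs_if split: if_splits)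
  show "finv a mn k off x = xs"
    using finv_eq_digits[OF digits m] map_nth_pred_upt[of xs] assms(1) by simp
qed

lemma coeffs_same_sign:
  fixes a :: "nat \<Rightarrow> int"
  assumes nonzero: "\<forall>i\<in>{1..k}. a i \<noteq> 0"
    and adjacent: "\<forall>i. 1 \<le> i \<and> i < k \<longrightarrow> (0 \<le> a i \<longleftrightarrow> 0 \<le> a (i + 1))"
    and i: "i \<in> {1..k}"
  shows "a i = sgn (a 1) * \<bar>a i\<bar>"
proof -
  have same_sign: "0 \<le> a j \<longleftrightarrow> 0 \<le> a 1" if "1 \<le> j" "j \<le> k" for j
    using that
  proof (induction j rule: dec_induct)
    case (step j)
    then have "j < k"
      by simp
    then have "0 \<le> a j \<longleftrightarrow> 0 \<le> a (Suc j)"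
      using adjacent step.hyps(1) by simp
    with step.IH \<open>j < k\<close> show ?case
      by simp
  qed simp
  have "0 \<le> a i \<longleftrightarrow> 0 \<le> a 1"
    using same_sign[of i] i by simp
  moreover have "a i \<noteq> 0" "a 1 \<noteq> 0"
    using nonzero i by auto
  ultimately show ?thesis
    by (auto simp: sgn_if)
qed

lemma signed_range_iff:
  fixes a :: "nat \<Rightarrow> int"
  assumes "a 1 \<noteq> 0" "a k = sgn (a 1) * \<bar>a k\<bar>"
  shows "((0 < a 1 \<longrightarrow> 0 \<le> y \<and> y < a k * n) \<and> (a 1 < 0 \<longrightarrow> a k * n < y \<and> y \<le> 0))
     \<longleftrightarrow> \<bar>y\<bar> = sgn (a 1) * y \<and> \<bar>y\<bar> < \<bar>a k\<bar> * n"
  using assms by (cases "0 < a 1") (auto simp: sgn_if)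

theorem theorem1:
  fixes k :: nat and A :: "int \<Rightarrow> 'v" and R :: "'v \<Rightarrow> int list \<Rightarrow> bool"
    and C :: "int list \<Rightarrow> bool" and a mn :: "nat \<Rightarrow> int" and b mx :: int
  defines "nk \<equiv> mx - mn k"
    and "X \<equiv> (\<lambda>xs. C xs \<and> (\<forall>i\<in>{1..k}. mn i \<le> xs ! (i - 1)) \<and> xs ! (k - 1) < mx)"
    and "f \<equiv> (\<lambda>xs. (\<Sum>i = 1..k. a i * xs ! (i - 1)) + b)"
    and "off \<equiv> (\<Sum>i = 1..k. a i * mn i) + b"
  defines "Y \<equiv> (\<lambda>x. C (finv a mn k off x)
               \<and> base a k off 1 x mod \<bar>a 1\<bar> = 0
               \<and> (a 1 > 0 \<longrightarrow> 0 \<le> x - off \<and> x - off < a k * nk)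
               \<and> (a 1 < 0 \<longrightarrow> a k * nk < x - off \<and> x - off \<le> 0))"
  assumes k1: "k \<ge> 1"
    and "nk > 0"
    and nonzero: "\<forall>i\<in>{1..k}. a i \<noteq> 0"
    and adjacent: "\<forall>i. 1 \<le> i \<and> i < k \<longrightarrow> (a i \<ge> 0 \<longleftrightarrow> a (i + 1) \<ge> 0)"
    and radix: "\<forall>i. 1 \<le> i \<and> i < k \<longrightarrow> (\<forall>xs. length xs = k \<and> X xs \<longrightarrow>
           (\<Sum>j = 1..i. \<bar>a j\<bar> * (xs ! (j - 1) - mn j)) < \<bar>a (i + 1)\<bar>)"
  shows "(\<forall>xs. length xs = k \<and> X xs \<longrightarrow> R (A (f xs)) xs)
     \<longleftrightarrow> (\<forall>x. Y x \<longrightarrow> R (A x) (finv a mn k off x))"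
proof -
  define s where "s = sgn (a 1)"
  have a1: "a 1 \<noteq> 0"
    using nonzero k1 by simp
  then have s: "\<bar>s\<bar> = 1"
    unfolding s_def by (simp add: abs_sgn)
  have sign: "\<forall>i\<in>{1..k}. a i = s * \<bar>a i\<bar>"
    using coeffs_same_sign[OF nonzero adjacent] unfolding s_def by blast
  have range: "(a 1 > 0 \<longrightarrow> 0 \<le> y \<and> y < a k * nk) \<and> (a 1 < 0 \<longrightarrow> a k * nk < y \<and> y \<le> 0)
      \<longleftrightarrow> \<bar>y\<bar> = s * y \<and> \<bar>y\<bar> < \<bar>a k\<bar> * nk" for y
    using signed_range_iff[of a k, OF a1] sign k1 unfolding s_def by simp
  have f_minus_off: "f xs - off = (\<Sum>i = 1..k. a i * (xs ! (i - 1) - mn i))" for xs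
    unfolding f_def off_def by (simp add: sum_subtractf right_diff_distrib)
  have finv_inverse: "X (finv a mn k off x) \<and> f (finv a mn k off x) = x" if "Y x" for x
  proof -
    have x: "base a k off 1 x mod \<bar>a 1\<bar> = 0" "\<bar>x - off\<bar> = s * (x - off)"
        "\<bar>x - off\<bar> < \<bar>a k\<bar> * nk" "C (finv a mn k off x)"
      using that range[of "x - off"] unfolding Y_def by simp_all
    then show ?thesis
      using finv_lower finv_upper[of k x off a nk mn, OF k1 x(3)]
        weighted_sum_finv[OF k1 sign s x(1,2)] f_minus_off[of "finv a mn k off x"]
      unfolding X_def nk_def by simp
  qed
  have f_inverse: "Y (f xs) \<and> finv a mn k off (f xs) = xs" if "length xs = k" "X xs" for xs
  proof -
    have digits: "radix_digits a k (\<lambda>i. xs ! (i - 1) - mn i)"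
      using that radix nonzero k1 unfolding radix_digits_iff mixed_radix_def X_def by simp
    note fx = finv_of_linear_index[OF that(1) sign s digits f_minus_off]
    have "mixed_radix a (\<lambda>i. xs ! (i - 1) - mn i) k < \<bar>a k\<bar> * nk"
      using mixed_radix_less[OF digits k1] that(2) unfolding X_def nk_def by simp
    then show ?thesis
      using that(2) range[of "f xs - off"] base_one_mod_eq_0[OF digits fx(1) k1] fx
      unfolding Y_def X_def by simp
  qed
  show ?thesis
    using finv_inverse f_inverse length_finv by metis
qed

end
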